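(* Let $q$ be a prime power, let $G$ be the incidence graph of a projective plane of order $q$, let $e_0=v_0v_1$ be an edge of $G$, and let $\hat G$ be the graph obtained from two disjoint copies $G^{(1)},G^{(2)}$ of $G$ by deleting the two copies of $e_0$ and adding the edges $v_0^{(1)}v_1^{(2)}$ and $v_0^{(2)}v_1^{(1)}$. Then $\sqrt{q-1}-1<R(\hat G)<\sqrt{q}-1$, and the real number $R(\hat G)$ is a root of $\lambda^3+(1-q)\lambda^2-3q\lambda+q^2-q$ lying in this interval.
   Context: For a graph $H$ of order $n$ with adjacency eigenvalues $\lambda_1\geqslant\cdots\geqslant\lambda_n$, the HL-index is $R(H)=\max\{|\lambda_{\lfloor (n+1)/2\rfloor}|,\ |\lambda_{\lceil (n+1)/2\rceil}|\}$. The incidence graph of a projective plane is the bipartite graph whose two parts are the points and the lines, a point being adjacent to a line iff it lies on it; for order $q$ it is $(q+1)$-regular with $2(q^2+q+1)$ vertices. *)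

theory Defs
  imports "Jordan_Normal_Form.Char_Poly" "HOL-Computational_Algebra.Primes"
begin

definition prime_power_nat :: "nat \<Rightarrow> bool" where
  "prime_power_nat q \<longleftrightarrow> (\<exists>p k. prime p \<and> k > 0 \<and> q = p ^ k)"

definition proj_plane_order :: "'p set \<Rightarrow> 'p set set \<Rightarrow> nat \<Rightarrow> bool" where
  "proj_plane_order P L q \<longleftrightarrow>
     finite P \<and> (\<forall>l\<in>L. l \<subseteq> P) \<and>
     (\<forall>x\<in>P. \<forall>y\<in>P. x \<noteq> y \<longrightarrow> (\<exists>!l. l \<in> L \<and> x \<in> l \<and> y \<in> l)) \<and>
     (\<forall>l\<in>L. \<forall>m\<in>L. l \<noteq> m \<longrightarrow> (\<exists>!x. x \<in> P \<and> x \<in> l \<and> x \<in> m)) \<and>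
     (\<exists>S\<subseteq>P. card S = 4 \<and> (\<forall>l\<in>L. card (S \<inter> l) \<le> 2)) \<and>
     (\<forall>l\<in>L. card l = q + 1)"

definition inc_vertices :: "'p set \<Rightarrow> 'p set set \<Rightarrow> ('p + 'p set) set" where
  "inc_vertices P L = Inl ` P \<union> Inr ` L"

definition inc_adj :: "('p + 'p set) \<Rightarrow> ('p + 'p set) \<Rightarrow> bool" where
  "inc_adj u v \<longleftrightarrow> (\<exists>x l. (u = Inl x \<and> v = Inr l \<or> u = Inr l \<and> v = Inl x) \<and> x \<in> l)"

definition double_vertices :: "'v set \<Rightarrow> (bool \<times> 'v) set" where
  "double_vertices V = UNIV \<times> V"

definition double_adj :: "('v \<Rightarrow> 'v \<Rightarrow> bool) \<Rightarrow> 'v \<Rightarrow> 'v \<Rightarrow> (bool \<times> 'v) \<Rightarrow> (bool \<times> 'v) \<Rightarrow> bool" where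
  "double_adj adj v0 v1 a b \<longleftrightarrow>
     (fst a = fst b \<and> adj (snd a) (snd b) \<and> {snd a, snd b} \<noteq> {v0, v1}) \<or>
     (fst a \<noteq> fst b \<and> (snd a = v0 \<and> snd b = v1 \<or> snd a = v1 \<and> snd b = v0))"

definition adj_matrix :: "'v set \<Rightarrow> ('v \<Rightarrow> 'v \<Rightarrow> bool) \<Rightarrow> real mat" where
  "adj_matrix V adj = (let xs = (SOME xs. distinct xs \<and> set xs = V) in
     mat (length xs) (length xs) (\<lambda>(i,j). if adj (xs ! i) (xs ! j) then 1 else 0))"

text \<open>Adjacency eigenvalues (with multiplicity), in non-increasing order: lambda_1 = entry 0.\<close>
definition adj_eigenvalues :: "'v set \<Rightarrow> ('v \<Rightarrow> 'v \<Rightarrow> bool) \<Rightarrow> real list" where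
  "adj_eigenvalues V adj = rev (sorted_list_of_multiset (proots (char_poly (adj_matrix V adj))))"

text \<open>HL-index: max of |lambda_floor((n+1)/2)| and |lambda_ceil((n+1)/2)| (1-based).\<close>
definition HL_index :: "'v set \<Rightarrow> ('v \<Rightarrow> 'v \<Rightarrow> bool) \<Rightarrow> real" where
  "HL_index V adj = (let n = card V; ev = adj_eigenvalues V adj in
     max \<bar>ev ! ((n + 1) div 2 - 1)\<bar> \<bar>ev ! ((n + 2) div 2 - 1)\<bar>)"

end

theory Submission
  imports Defs
begin

text \<open>Let \<open>M\<close> be the adjacency matrix of the doubled graph and \<open>N = q\<^sup>2 + q + 1\<close>. In block form
  \<open>M\<close> has \<open>A - E\<close> on the diagonal and \<open>E\<close> off it, where \<open>A\<close> is the incidence matrix and \<open>E\<close>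
  the matrix of the deleted edge. Since two points (two lines) of a projective plane have exactly
  one common neighbour, \<open>A\<^sup>2 = q I + J\<^sub>P + J\<^sub>L\<close>, and hence \<open>M\<^sup>2 = q I + T\<close> where \<open>T\<close> is a sum of four
  matrices of ranks 1, 1, 3, 3 whose pairwise products vanish. Sylvester's identity
  \<open>y\<^sup>k det (y - U W) = y\<^sup>n det (y - W U)\<close> reduces \<open>det (y - T)\<close> to Gram determinants of size at most
  three: \<open>det (y - T) = y\<^sup>n\<^sup>-\<^sup>8 (y - N)\<^sup>2 (y\<^sup>3 - N y\<^sup>2 + 4 q\<^sup>3)\<^sup>2\<close>. The doubled graph is still bipartite,
  so the characteristic polynomial \<open>\<chi>\<close> satisfies \<open>\<chi>(x)\<^sup>2 = det (x\<^sup>2 - M\<^sup>2)\<close>; as \<open>\<chi>\<close> is monic this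
  gives \<open>\<chi>(x) = (x\<^sup>2 - (q + 1)\<^sup>2) (x\<^sup>2 - q)\<^sup>m c(x) (- c(- x))\<close> with \<open>c\<close> the cubic of the statement.
  Sign changes locate one root of \<open>c\<close> below \<open>-\<surd>q\<close>, one root \<open>R\<close> in \<open>(\<surd>(q - 1) - 1, \<surd>q - 1)\<close> and
  one above \<open>\<surd>q\<close>, so the two middle eigenvalues are \<open>\<plusminus>R\<close>.\<close>

section \<open>Determinant identities\<close>

lemma det_one_minus_mult_commute:
  fixes U :: "'a :: idom mat"
  assumes U: "U \<in> carrier_mat n k" and W: "W \<in> carrier_mat k n"
  shows "det (1\<^sub>m n - U * W) = det (1\<^sub>m k - W * U)"
proof -
  define Z where "Z = four_block_mat (1\<^sub>m n) U W (1\<^sub>m k)"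
  define E where "E = four_block_mat (1\<^sub>m n) (- U) (0\<^sub>m k n) (1\<^sub>m k)"
  have UW: "U * W \<in> carrier_mat n n" and WU: "W * U \<in> carrier_mat k k" using U W by auto
  have "Z * E = four_block_mat (1\<^sub>m n * 1\<^sub>m n + U * 0\<^sub>m k n) (1\<^sub>m n * (- U) + U * 1\<^sub>m k)
     (W * 1\<^sub>m n + 1\<^sub>m k * 0\<^sub>m k n) (W * (- U) + 1\<^sub>m k * 1\<^sub>m k)"
    unfolding Z_def E_def by (rule mult_four_block_mat, insert U W, auto)
  also have "\<dots> = four_block_mat (1\<^sub>m n) (0\<^sub>m n k) W (1\<^sub>m k - W * U)"
    using U W by (intro cong_four_block_mat, auto)
  finally have ZE: "Z * E = four_block_mat (1\<^sub>m n) (0\<^sub>m n k) W (1\<^sub>m k - W * U)" .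
  have "E * Z = four_block_mat (1\<^sub>m n * 1\<^sub>m n + (- U) * W) (1\<^sub>m n * U + (- U) * 1\<^sub>m k)
     (0\<^sub>m k n * 1\<^sub>m n + 1\<^sub>m k * W) (0\<^sub>m k n * U + 1\<^sub>m k * 1\<^sub>m k)"
    unfolding Z_def E_def by (rule mult_four_block_mat, insert U W, auto)
  also have "\<dots> = four_block_mat (1\<^sub>m n - U * W) (0\<^sub>m n k) W (1\<^sub>m k)"
    using U W by (intro cong_four_block_mat, auto)
  finally have EZ: "E * Z = four_block_mat (1\<^sub>m n - U * W) (0\<^sub>m n k) W (1\<^sub>m k)" .
  have Zc: "Z \<in> carrier_mat (n+k) (n+k)" and Ec: "E \<in> carrier_mat (n+k) (n+k)"
    unfolding Z_def E_def using U W by auto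
  have "det (1\<^sub>m k - W * U) = det (Z * E)" unfolding ZE
    using det_four_block_mat_upper_right_zero[OF one_carrier_mat refl W, of "1\<^sub>m k - W * U"] WU
    by (simp add: minus_carrier_mat)
  also have "\<dots> = det (E * Z)"
    using det_mult[OF Zc Ec] det_mult[OF Ec Zc] by simp
  also have "\<dots> = det (1\<^sub>m n - U * W)" unfolding EZ
    using det_four_block_mat_upper_right_zero[of "1\<^sub>m n - U * W" n, OF _ refl W one_carrier_mat] UW
    by (simp add: minus_carrier_mat)
  finally show ?thesis ..
qed

lemma det_char_mult_commute:
  fixes U :: "'a :: field mat"
  assumes U: "U \<in> carrier_mat n k" and W: "W \<in> carrier_mat k n" and y: "y \<noteq> 0"
  shows "y ^ k * det (y \<cdot>\<^sub>m 1\<^sub>m n - U * W) = y ^ n * det (y \<cdot>\<^sub>m 1\<^sub>m k - W * U)"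
proof -
  let ?U = "(1 / y) \<cdot>\<^sub>m U"
  have U': "?U \<in> carrier_mat n k" using U by auto
  have "y \<cdot>\<^sub>m 1\<^sub>m n - U * W = y \<cdot>\<^sub>m (1\<^sub>m n - ?U * W)"
    using U W y by (intro eq_matI, auto simp: field_simps)
  hence n: "det (y \<cdot>\<^sub>m 1\<^sub>m n - U * W) = y ^ n * det (1\<^sub>m n - ?U * W)" using U W by simp
  have "y \<cdot>\<^sub>m 1\<^sub>m k - W * U = y \<cdot>\<^sub>m (1\<^sub>m k - W * ?U)"
    using U W y by (intro eq_matI, auto simp: field_simps)
  hence k: "det (y \<cdot>\<^sub>m 1\<^sub>m k - W * U) = y ^ k * det (1\<^sub>m k - W * ?U)" using U W by simp
  show ?thesis unfolding n k det_one_minus_mult_commute[OF U' W] by simp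
qed

lemma char_mat_mult:
  fixes A :: "'a :: comm_ring_1 mat"
  assumes A: "A \<in> carrier_mat n n" and B: "B \<in> carrier_mat n n"
  shows "(y \<cdot>\<^sub>m 1\<^sub>m n - A) * (y \<cdot>\<^sub>m 1\<^sub>m n - B) = y \<cdot>\<^sub>m (y \<cdot>\<^sub>m 1\<^sub>m n - (A + B)) + A * B"
proof -
  have "(y \<cdot>\<^sub>m 1\<^sub>m n - A) * (y \<cdot>\<^sub>m 1\<^sub>m n - B) = (y \<cdot>\<^sub>m 1\<^sub>m n) * (y \<cdot>\<^sub>m 1\<^sub>m n - B) - A * (y \<cdot>\<^sub>m 1\<^sub>m n - B)"
    using A B by (intro minus_mult_distrib_mat, auto)
  also have "(y \<cdot>\<^sub>m 1\<^sub>m n) * (y \<cdot>\<^sub>m 1\<^sub>m n - B) = y \<cdot>\<^sub>m (y \<cdot>\<^sub>m 1\<^sub>m n - B)"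
    using B by (subst mult_smult_assoc_mat[of _ n n _ n], auto)
  also have "A * (y \<cdot>\<^sub>m 1\<^sub>m n - B) = A * (y \<cdot>\<^sub>m 1\<^sub>m n) - A * B"
    using A B by (intro mult_minus_distrib_mat, auto)
  also have "A * (y \<cdot>\<^sub>m 1\<^sub>m n) = y \<cdot>\<^sub>m A" using A by (subst mult_smult_distrib[of _ n n _ n], auto)
  finally show ?thesis using A B by (intro eq_matI, auto simp: algebra_simps)
qed

lemma det_char_add_of_mult_zero:
  fixes A :: "'a :: comm_ring_1 mat"
  assumes A: "A \<in> carrier_mat n n" and B: "B \<in> carrier_mat n n" and AB: "A * B = 0\<^sub>m n n"
  shows "y ^ n * det (y \<cdot>\<^sub>m 1\<^sub>m n - (A + B)) = det (y \<cdot>\<^sub>m 1\<^sub>m n - A) * det (y \<cdot>\<^sub>m 1\<^sub>m n - B)"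
proof -
  have "(y \<cdot>\<^sub>m 1\<^sub>m n - A) * (y \<cdot>\<^sub>m 1\<^sub>m n - B) = y \<cdot>\<^sub>m (y \<cdot>\<^sub>m 1\<^sub>m n - (A + B))"
    unfolding char_mat_mult[OF A B] AB using A B by (intro eq_matI, auto)
  hence "det ((y \<cdot>\<^sub>m 1\<^sub>m n - A) * (y \<cdot>\<^sub>m 1\<^sub>m n - B)) = y ^ n * det (y \<cdot>\<^sub>m 1\<^sub>m n - (A + B))"
    using A B by simp
  moreover have "det ((y \<cdot>\<^sub>m 1\<^sub>m n - A) * (y \<cdot>\<^sub>m 1\<^sub>m n - B)) = det (y \<cdot>\<^sub>m 1\<^sub>m n - A) * det (y \<cdot>\<^sub>m 1\<^sub>m n - B)"
    using A B by (intro det_mult, auto)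
  ultimately show ?thesis by simp
qed

lemma det_char_mult_neg:
  fixes A :: "'a :: comm_ring_1 mat"
  assumes A: "A \<in> carrier_mat n n"
  shows "det (x \<cdot>\<^sub>m 1\<^sub>m n - A) * det (x \<cdot>\<^sub>m 1\<^sub>m n + A) = det (x\<^sup>2 \<cdot>\<^sub>m 1\<^sub>m n - A * A)"
proof -
  have "x \<cdot>\<^sub>m 1\<^sub>m n + A = x \<cdot>\<^sub>m 1\<^sub>m n - (- A)" using A by (intro eq_matI, auto)
  moreover have "(x \<cdot>\<^sub>m 1\<^sub>m n - A) * (x \<cdot>\<^sub>m 1\<^sub>m n - (- A)) = x\<^sup>2 \<cdot>\<^sub>m 1\<^sub>m n - A * A"
    unfolding char_mat_mult[OF A uminus_carrier_mat[OF A]] using A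
    by (intro eq_matI, auto simp: power2_eq_square)
  moreover have "det ((x \<cdot>\<^sub>m 1\<^sub>m n - A) * (x \<cdot>\<^sub>m 1\<^sub>m n - (- A)))
      = det (x \<cdot>\<^sub>m 1\<^sub>m n - A) * det (x \<cdot>\<^sub>m 1\<^sub>m n - (- A))"
    using A by (intro det_mult, auto)
  ultimately show ?thesis by simp
qed

lemma det_mat1: "det (mat 1 1 f) = (f (0,0) :: 'a :: comm_ring_1)"
  by (subst det_single, auto)

lemma det_mat2: "det (mat 2 2 f) = f (0,0) * f (1,1) - f (0,1) * (f (1,0) :: 'a :: comm_ring_1)"
proof -
  have "det (mat 2 2 f) = (\<Sum>j<2. mat 2 2 f $$ (0,j) * cofactor (mat 2 2 f) 0 j)"
    by (rule laplace_expansion_row, auto)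
  also have "\<dots> = f (0,0) * f (1,1) - f (0,1) * f (1,0)"
    by (simp add: cofactor_def mat_delete_def det_single numeral_2_eq_2 lessThan_Suc)
  finally show ?thesis .
qed

lemma det_mat3: "det (mat 3 3 f) =
   f (0,0) * (f (1,1) * f (2,2) - f (1,2) * f (2,1))
 - f (0,1) * (f (1,0) * f (2,2) - f (1,2) * f (2,0))
 + f (0,2) * (f (1,0) * f (2,1) - f (1,1) * (f (2,0) :: 'a :: comm_ring_1))"
proof -
  have minor: "mat_delete (mat 3 3 f) 0 j = mat 2 2 (\<lambda>(i',j'). f (Suc i', if j' < j then j' else Suc j'))" for j
    unfolding mat_delete_def by (intro eq_matI, auto)
  have "det (mat 3 3 f) = (\<Sum>j<3. mat 3 3 f $$ (0,j) * cofactor (mat 3 3 f) 0 j)"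
    by (rule laplace_expansion_row, auto)
  also have "\<dots> = f (0,0) * cofactor (mat 3 3 f) 0 0 + f (0,1) * cofactor (mat 3 3 f) 0 1
      + f (0,2) * cofactor (mat 3 3 f) 0 2"
    by (simp add: numeral_3_eq_3 numeral_2_eq_2)
  finally show ?thesis
    unfolding cofactor_def minor det_mat2 by (simp add: numeral_2_eq_2 algebra_simps)
qed

lemma poly_char_poly_eq_det:
  fixes A :: "'a :: field mat"
  assumes "A \<in> carrier_mat n n"
  shows "poly (char_poly A) x = det (x \<cdot>\<^sub>m 1\<^sub>m n - A)"
proof -
  have "- char_matrix A x = x \<cdot>\<^sub>m 1\<^sub>m n - A"
    using assms unfolding char_matrix_def by (intro eq_matI, auto)
  thus ?thesis using char_poly_matrix[OF assms] by simp
qed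

lemma mult_power_cancel:
  fixes y :: "'a :: field"
  assumes "y \<noteq> 0" "k \<le> n" "y ^ k * X = y ^ n * Z"
  shows "X = y ^ (n - k) * Z"
proof -
  have "y ^ n = y ^ k * y ^ (n - k)" using assms(2) by (simp add: power_add[symmetric])
  thus ?thesis using assms(1,3) by simp
qed

lemma det_char_add_of_mult_zero_power:
  fixes A :: "'a :: field mat"
  assumes A: "A \<in> carrier_mat n n" and B: "B \<in> carrier_mat n n" and AB: "A * B = 0\<^sub>m n n"
    and y: "y \<noteq> 0" and ab: "a + b \<le> n"
    and detA: "det (y \<cdot>\<^sub>m 1\<^sub>m n - A) = y ^ (n - a) * f"
    and detB: "det (y \<cdot>\<^sub>m 1\<^sub>m n - B) = y ^ (n - b) * g"
  shows "det (y \<cdot>\<^sub>m 1\<^sub>m n - (A + B)) = y ^ (n - (a + b)) * (f * g)"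
proof -
  have "y ^ (n - a + (n - b)) = y ^ n * y ^ (n - (a + b))"
    using ab by (simp add: power_add[symmetric])
  hence "y ^ n * det (y \<cdot>\<^sub>m 1\<^sub>m n - (A + B)) = y ^ n * (y ^ (n - (a + b)) * (f * g))"
    unfolding det_char_add_of_mult_zero[OF A B AB] detA detB by (simp add: power_add)
  thus ?thesis using y by simp
qed

section \<open>Matrices indexed by a list of keys\<close>

definition index_mat :: "'a list \<Rightarrow> ('a \<Rightarrow> 'a \<Rightarrow> 'b) \<Rightarrow> 'b mat" where
  "index_mat xs F = mat (length xs) (length xs) (\<lambda>(i,j). F (xs!i) (xs!j))"

lemma index_mat_carrier [simp]: "index_mat xs F \<in> carrier_mat (length xs) (length xs)"
  unfolding index_mat_def by simp

lemma index_mat_dim [simp]: "dim_row (index_mat xs F) = length xs" "dim_col (index_mat xs F) = length xs"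
  unfolding index_mat_def by auto

lemma index_mat_index [simp]:
  "i < length xs \<Longrightarrow> j < length xs \<Longrightarrow> index_mat xs F $$ (i,j) = F (xs!i) (xs!j)"
  unfolding index_mat_def by simp

lemma index_mat_cong:
  "(\<And>a b. a \<in> set xs \<Longrightarrow> b \<in> set xs \<Longrightarrow> F a b = G a b) \<Longrightarrow> index_mat xs F = index_mat xs G"
  by (intro eq_matI, auto)

lemma index_mat_add: "index_mat xs F + index_mat xs G = index_mat xs (\<lambda>a b. F a b + G a b)"
  by (intro eq_matI, auto)

lemma index_mat_char:
  fixes F :: "'a \<Rightarrow> 'a \<Rightarrow> 'b :: ring_1"
  shows "distinct xs \<Longrightarrow> y \<cdot>\<^sub>m 1\<^sub>m (length xs) - index_mat xs F = index_mat xs (\<lambda>a b. of_bool (a = b) * y - F a b)"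
  by (intro eq_matI, auto simp: nth_eq_iff_index_eq)

lemma sum_nth_distinct: "distinct xs \<Longrightarrow> (\<Sum>i<length xs. f (xs!i)) = (\<Sum>c\<in>set xs. f c)"
  by (rule sum.reindex_bij_betw[OF bij_betw_nth[OF _ refl refl]])

lemma index_mat_mult:
  fixes F G :: "'a \<Rightarrow> 'a \<Rightarrow> 'b :: comm_semiring_0"
  assumes "distinct xs"
  shows "index_mat xs F * index_mat xs G = index_mat xs (\<lambda>a b. \<Sum>c\<in>set xs. F a c * G c b)"
proof (rule eq_matI)
  fix i j assume "i < dim_row (index_mat xs (\<lambda>a b. \<Sum>c\<in>set xs. F a c * G c b))"
    "j < dim_col (index_mat xs (\<lambda>a b. \<Sum>c\<in>set xs. F a c * G c b))"
  hence i: "i < length xs" and j: "j < length xs" by auto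
  have "(index_mat xs F * index_mat xs G) $$ (i,j) = (\<Sum>l<length xs. F (xs!i) (xs!l) * G (xs!l) (xs!j))"
    using i j by (simp add: scalar_prod_def atLeast0LessThan)
  also have "\<dots> = (\<Sum>c\<in>set xs. F (xs!i) c * G c (xs!j))"
    by (rule sum_nth_distinct[OF assms])
  finally show "(index_mat xs F * index_mat xs G) $$ (i,j) = index_mat xs (\<lambda>a b. \<Sum>c\<in>set xs. F a c * G c b) $$ (i,j)"
    using i j by simp
qed auto

lemma det_char_index_mat_bipartite:
  fixes F :: "'a \<Rightarrow> 'a \<Rightarrow> 'b :: comm_ring_1" and side :: "'a \<Rightarrow> bool"
  assumes xs: "distinct xs" and bip: "\<And>a b. F a b \<noteq> 0 \<Longrightarrow> side a \<noteq> side b"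
  shows "det (y \<cdot>\<^sub>m 1\<^sub>m (length xs) + index_mat xs F) = det (y \<cdot>\<^sub>m 1\<^sub>m (length xs) - index_mat xs F)"
proof -
  let ?n = "length xs"
  define g :: "'a \<Rightarrow> 'b" where "g a = (if side a then 1 else -1)" for a
  define D where "D = index_mat xs (\<lambda>a b. of_bool (a = b) * g a)"
  have delta: "(\<Sum>c\<in>set xs. of_bool (a = c) * h c) = h a" if "a \<in> set xs" for a and h :: "'a \<Rightarrow> 'b"
    using that by (simp add: of_bool_def if_distrib[of "\<lambda>t. t * h _"] cong: if_cong)
  have D_left: "D * index_mat xs H = index_mat xs (\<lambda>a b. g a * H a b)" for H
    unfolding D_def index_mat_mult[OF xs]
    by (rule index_mat_cong, subst delta[symmetric], auto simp: ac_simps)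
  have D_right: "index_mat xs H * D = index_mat xs (\<lambda>a b. H a b * g b)" for H
    unfolding D_def index_mat_mult[OF xs]
  proof (rule index_mat_cong)
    fix a b assume "b \<in> set xs"
    thus "(\<Sum>c\<in>set xs. H a c * (of_bool (c = b) * g c)) = H a b * g b"
      by (simp add: of_bool_def if_distrib[of "\<lambda>t. _ * (t * _)"] cong: if_cong)
  qed
  have "D * D = index_mat xs (\<lambda>a b. g a * (of_bool (a = b) * g a))"
    by (subst (2) D_def, rule D_left)
  also have "\<dots> = 1\<^sub>m ?n" by (intro eq_matI, auto simp: g_def nth_eq_iff_index_eq xs)
  finally have DD: "D * D = 1\<^sub>m ?n" .
  have same_side: "F a b = 0" if "side a = side b" for a b
    using bip that by blast
  have conj: "D * (y \<cdot>\<^sub>m 1\<^sub>m ?n - index_mat xs F) * D = y \<cdot>\<^sub>m 1\<^sub>m ?n + index_mat xs F"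
    unfolding index_mat_char[OF xs] D_left D_right
    by (intro eq_matI, auto simp: g_def nth_eq_iff_index_eq xs same_side)
  have Dc: "D \<in> carrier_mat ?n ?n" unfolding D_def by simp
  let ?C = "y \<cdot>\<^sub>m 1\<^sub>m ?n - index_mat xs F"
  have Cc: "?C \<in> carrier_mat ?n ?n" by (rule minus_carrier_mat, auto)
  have "det (y \<cdot>\<^sub>m 1\<^sub>m ?n + index_mat xs F) = det (D * ?C) * det D"
    unfolding conj[symmetric] using Dc Cc by (intro det_mult, auto)
  also have "\<dots> = det (D * D) * det ?C"
    using det_mult[OF Dc Cc] det_mult[OF Dc Dc] by (simp add: ac_simps)
  finally show ?thesis unfolding DD by simp
qed

definition lowrank_mat :: "'a list \<Rightarrow> nat \<Rightarrow> (nat \<Rightarrow> 'a \<Rightarrow> 'b) \<Rightarrow> (nat \<Rightarrow> 'a \<Rightarrow> 'b) \<Rightarrow> 'b :: comm_semiring_0 mat"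
  where "lowrank_mat xs k us ws = index_mat xs (\<lambda>a b. \<Sum>r<k. us r a * ws r b)"

definition gram_mat :: "'a list \<Rightarrow> nat \<Rightarrow> (nat \<Rightarrow> 'a \<Rightarrow> 'b) \<Rightarrow> (nat \<Rightarrow> 'a \<Rightarrow> 'b) \<Rightarrow> 'b :: comm_semiring_0 mat"
  where "gram_mat xs k us ws = mat k k (\<lambda>(r,s). \<Sum>c\<in>set xs. ws r c * us s c)"

lemma lowrank_mat_carrier [simp]: "lowrank_mat xs k us ws \<in> carrier_mat (length xs) (length xs)"
  unfolding lowrank_mat_def by simp

lemma det_char_lowrank_mat:
  fixes us ws :: "nat \<Rightarrow> 'a \<Rightarrow> 'b :: field"
  assumes xs: "distinct xs" and y: "y \<noteq> 0"
  shows "y ^ k * det (y \<cdot>\<^sub>m 1\<^sub>m (length xs) - lowrank_mat xs k us ws)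
    = y ^ length xs * det (y \<cdot>\<^sub>m 1\<^sub>m k - gram_mat xs k us ws)"
proof -
  let ?n = "length xs"
  define U where "U = mat ?n k (\<lambda>(i,r). us r (xs!i))"
  define W where "W = mat k ?n (\<lambda>(r,j). ws r (xs!j))"
  have U: "U \<in> carrier_mat ?n k" and W: "W \<in> carrier_mat k ?n" unfolding U_def W_def by auto
  have "U * W = lowrank_mat xs k us ws" unfolding lowrank_mat_def
    by (intro eq_matI, auto simp: U_def W_def scalar_prod_def atLeast0LessThan)
  moreover have "W * U = gram_mat xs k us ws" unfolding gram_mat_def
    using sum_nth_distinct[OF xs] by (intro eq_matI, auto simp: U_def W_def scalar_prod_def atLeast0LessThan)
  ultimately show ?thesis using det_char_mult_commute[OF U W y] by simp
qed

lemma lowrank_mat_mult_eq_zero: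
  fixes us1 ws1 us2 ws2 :: "nat \<Rightarrow> 'a \<Rightarrow> 'b :: comm_semiring_1"
  assumes xs: "distinct xs"
    and orth: "\<And>r s. r < k1 \<Longrightarrow> s < k2 \<Longrightarrow> (\<Sum>c\<in>set xs. ws1 r c * us2 s c) = 0"
  shows "lowrank_mat xs k1 us1 ws1 * lowrank_mat xs k2 us2 ws2 = 0\<^sub>m (length xs) (length xs)"
proof -
  have "(\<Sum>c\<in>set xs. (\<Sum>r<k1. us1 r a * ws1 r c) * (\<Sum>s<k2. us2 s c * ws2 s b))
      = (\<Sum>r<k1. \<Sum>s<k2. us1 r a * ws2 s b * (\<Sum>c\<in>set xs. ws1 r c * us2 s c))" for a b
  proof -
    have "(\<Sum>c\<in>set xs. (\<Sum>r<k1. us1 r a * ws1 r c) * (\<Sum>s<k2. us2 s c * ws2 s b))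
      = (\<Sum>c\<in>set xs. \<Sum>r<k1. \<Sum>s<k2. us1 r a * ws2 s b * (ws1 r c * us2 s c))"
      by (simp add: sum_product algebra_simps)
    also have "\<dots> = (\<Sum>r<k1. \<Sum>s<k2. \<Sum>c\<in>set xs. us1 r a * ws2 s b * (ws1 r c * us2 s c))"
      by (subst sum.swap, rule sum.cong[OF refl], rule sum.swap)
    finally show ?thesis by (simp add: sum_distrib_left)
  qed
  hence "lowrank_mat xs k1 us1 ws1 * lowrank_mat xs k2 us2 ws2 = index_mat xs (\<lambda>a b. 0)"
    unfolding lowrank_mat_def index_mat_mult[OF xs] by (intro index_mat_cong, simp add: orth)
  thus ?thesis by (auto simp: index_mat_def)
qed

lemma char_gram_mat:
  fixes us ws :: "nat \<Rightarrow> 'a \<Rightarrow> 'b :: comm_ring_1"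
  shows "y \<cdot>\<^sub>m 1\<^sub>m k - gram_mat xs k us ws
    = mat k k (\<lambda>(r,s). (if r = s then y else 0) - (\<Sum>c\<in>set xs. ws r c * us s c))"
  unfolding gram_mat_def by (intro eq_matI, auto)

section \<open>Projective planes\<close>

locale proj_plane =
  fixes P :: "'p set" and L :: "'p set set" and q :: nat
  assumes proj_plane: "proj_plane_order P L q"
begin

lemma finite_points: "finite P"
  and line_subset: "l \<in> L \<Longrightarrow> l \<subseteq> P"
  and ex1_line: "x \<in> P \<Longrightarrow> y \<in> P \<Longrightarrow> x \<noteq> y \<Longrightarrow> \<exists>!l. l \<in> L \<and> x \<in> l \<and> y \<in> l"
  and ex1_point: "l \<in> L \<Longrightarrow> m \<in> L \<Longrightarrow> l \<noteq> m \<Longrightarrow> \<exists>!x. x \<in> P \<and> x \<in> l \<and> x \<in> m"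
  and quadrangle: "\<exists>S\<subseteq>P. card S = 4 \<and> (\<forall>l\<in>L. card (S \<inter> l) \<le> 2)"
  and card_line: "l \<in> L \<Longrightarrow> card l = q + 1"
  using proj_plane unfolding proj_plane_order_def by simp_all

lemma finite_lines: "finite L"
  by (rule finite_subset[of _ "Pow P"]) (use line_subset finite_points in auto)

lemma finite_line: "l \<in> L \<Longrightarrow> finite l"
  using line_subset finite_points by (rule finite_subset)

lemma common_point_unique:
  assumes "l \<in> L" "m \<in> L" "l \<noteq> m" "x \<in> l" "x \<in> m" "y \<in> l" "y \<in> m"
  shows "x = y"
proof -
  have "x \<in> P" "y \<in> P" using line_subset assms by auto
  thus ?thesis using ex1_point[OF assms(1-3)] assms(4-7) by (metis (no_types, lifting))
qed

lemma ex_line_avoiding: assumes x: "x \<in> P" shows "\<exists>m\<in>L. x \<notin> m"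
proof (rule ccontr)
  assume all: "\<not> (\<exists>m\<in>L. x \<notin> m)"
  obtain S where S: "S \<subseteq> P" "card S = 4" and Sl: "\<forall>l\<in>L. card (S \<inter> l) \<le> 2"
    using quadrangle by auto
  have fS: "finite S" using S finite_points finite_subset by blast
  have "card (S - {x}) \<ge> 3" using S fS by (simp add: card_Diff_singleton_if)
  then obtain T where T: "T \<subseteq> S - {x}" "card T = 3" by (meson obtain_subset_with_card_n)
  then obtain a b c where abc: "T = {a,b,c}" "a \<noteq> b" "b \<noteq> c" "a \<noteq> c" by (auto simp: card_3_iff)
  have inP: "a \<in> P" "b \<in> P" "c \<in> P" and nx: "a \<noteq> x" using T abc S by auto
  obtain lab where lab: "lab \<in> L" "a \<in> lab" "b \<in> lab" using ex1_line[OF inP(1,2) abc(2)] by auto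
  obtain lac where lac: "lac \<in> L" "a \<in> lac" "c \<in> lac" using ex1_line[OF inP(1,3) abc(4)] by auto
  show False
  proof (cases "lab = lac")
    case True
    have "{a,b,c} \<subseteq> S \<inter> lab" using T abc lab lac True by auto
    hence "card {a,b,c} \<le> card (S \<inter> lab)" using fS by (intro card_mono, auto)
    thus False using Sl lab abc by auto
  next
    case False
    have "x \<in> lab" "x \<in> lac" using all lab lac by auto
    thus False using common_point_unique[OF lab(1) lac(1) False, of x a] lab lac nx by auto
  qed
qed

lemma card_lines_through: assumes x: "x \<in> P" shows "card {l\<in>L. x \<in> l} = q + 1"
proof -
  obtain m where m: "m \<in> L" "x \<notin> m" using ex_line_avoiding[OF x] by auto
  define join where "join y = (THE l. l \<in> L \<and> x \<in> l \<and> y \<in> l)" for y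
  have join: "join y \<in> L \<and> x \<in> join y \<and> y \<in> join y" if "y \<in> m" for y
  proof -
    have "y \<in> P" "x \<noteq> y" using that m line_subset by auto
    from theI'[OF ex1_line[OF x this]] show ?thesis unfolding join_def .
  qed
  have "inj_on join m"
  proof
    fix y1 y2 assume y: "y1 \<in> m" "y2 \<in> m" "join y1 = join y2"
    have "join y1 \<noteq> m" using join[OF y(1)] m by auto
    thus "y1 = y2" using common_point_unique[of "join y1" m y1 y2] join y m by auto
  qed
  moreover have "join ` m = {l\<in>L. x \<in> l}"
  proof
    show "join ` m \<subseteq> {l\<in>L. x \<in> l}" using join by auto
    show "{l\<in>L. x \<in> l} \<subseteq> join ` m"
    proof
      fix l assume l: "l \<in> {l\<in>L. x \<in> l}"
      then obtain y where y: "y \<in> P" "y \<in> l" "y \<in> m" using ex1_point[of l m] m by auto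
      have "x \<noteq> y" using m y by auto
      hence "join y = l" using ex1_line[OF x y(1)] join[OF y(3)] l y
        by (metis (no_types, lifting) mem_Collect_eq)
      thus "l \<in> join ` m" using y by auto
    qed
  qed
  ultimately have "card {l\<in>L. x \<in> l} = card m" using card_image by metis
  thus ?thesis using card_line[OF m(1)] by simp
qed

lemma card_points: "card P = q * q + q + 1"
proof -
  obtain S where S: "S \<subseteq> P" "card S = 4" using quadrangle by auto
  then obtain x where x: "x \<in> P" by (metis card.empty ex_in_conv subset_eq zero_neq_numeral)
  let ?Lx = "{l\<in>L. x \<in> l}"
  have PU: "P = insert x (\<Union>l\<in>?Lx. l - {x})"
  proof
    show "P \<subseteq> insert x (\<Union>l\<in>?Lx. l - {x})"
    proof
      fix y assume y: "y \<in> P"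
      show "y \<in> insert x (\<Union>l\<in>?Lx. l - {x})"
      proof (cases "y = x")
        case False
        then obtain l where "l \<in> L" "x \<in> l" "y \<in> l" using ex1_line[OF x y] by auto
        thus ?thesis using False by auto
      qed auto
    qed
    show "insert x (\<Union>l\<in>?Lx. l - {x}) \<subseteq> P" using x line_subset by auto
  qed
  have fin: "finite ?Lx" using finite_lines by auto
  have disj: "(l1 - {x}) \<inter> (l2 - {x}) = {}" if "l1 \<in> ?Lx" "l2 \<in> ?Lx" "l1 \<noteq> l2" for l1 l2
    using common_point_unique[of l1 l2 x] that by auto
  have "card (\<Union>l\<in>?Lx. l - {x}) = (\<Sum>l\<in>?Lx. card (l - {x}))"
    by (rule card_UN_disjoint[OF fin], insert finite_line disj, auto)
  also have "\<dots> = (\<Sum>l\<in>?Lx. q)" using card_line finite_line by (intro sum.cong, auto)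
  also have "\<dots> = (q+1) * q" using card_lines_through[OF x] by simp
  finally have "card (\<Union>l\<in>?Lx. l - {x}) = (q+1) * q" .
  moreover have "finite (\<Union>l\<in>?Lx. l - {x})" using fin finite_line by auto
  moreover have "x \<notin> (\<Union>l\<in>?Lx. l - {x})" by blast
  ultimately have "card P = Suc ((q+1) * q)" by (subst PU) (metis card_insert_disjoint)
  thus ?thesis by (simp add: algebra_simps)
qed

lemma order_ge_1: "q \<ge> 1"
proof -
  obtain S where "S \<subseteq> P" "card S = 4" using quadrangle by auto
  hence "4 \<le> card P" using finite_points card_mono by metis
  thus ?thesis using card_points by (cases q) auto
qed

lemma card_lines: "card L = q * q + q + 1"
proof -
  obtain S where S: "S \<subseteq> P" "card S = 4" using quadrangle by auto
  have "card S \<ge> 2" using S by simp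
  then obtain T where "T \<subseteq> S" "card T = 2" by (meson obtain_subset_with_card_n)
  then obtain a b where "a \<in> P" "b \<in> P" "a \<noteq> b" using S by (auto simp: card_2_iff)
  then obtain l0 where l0: "l0 \<in> L" using ex1_line by blast
  let ?F = "\<lambda>y. {l\<in>L. y \<in> l} - {l0}"
  have LU: "L = insert l0 (\<Union>y\<in>l0. ?F y)"
  proof
    show "L \<subseteq> insert l0 (\<Union>y\<in>l0. ?F y)"
    proof
      fix l assume l: "l \<in> L"
      show "l \<in> insert l0 (\<Union>y\<in>l0. ?F y)"
      proof (cases "l = l0")
        case False
        then obtain y where "y \<in> l" "y \<in> l0" using ex1_point[OF l l0] by auto
        thus ?thesis using False l by auto
      qed auto
    qed
    show "insert l0 (\<Union>y\<in>l0. ?F y) \<subseteq> L" using l0 by auto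
  qed
  have fin: "finite l0" using finite_line l0 by auto
  have disj: "?F y1 \<inter> ?F y2 = {}" if "y1 \<in> l0" "y2 \<in> l0" "y1 \<noteq> y2" for y1 y2
    using common_point_unique[of _ l0 y1 y2] l0 that by auto
  have cF: "card (?F y) = q" if "y \<in> l0" for y
  proof -
    have "y \<in> P" using that l0 line_subset by auto
    thus ?thesis using card_lines_through[of y] that l0 finite_lines by (simp add: card_Diff_singleton_if)
  qed
  have "card (\<Union>y\<in>l0. ?F y) = (\<Sum>y\<in>l0. card (?F y))"
    by (rule card_UN_disjoint[OF fin], insert finite_lines disj, auto)
  also have "\<dots> = (\<Sum>y\<in>l0. q)" using cF by (intro sum.cong, auto)
  also have "\<dots> = (q+1) * q" using card_line[OF l0] by simp
  finally have "card (\<Union>y\<in>l0. ?F y) = (q+1) * q" .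
  moreover have "finite (\<Union>y\<in>l0. ?F y)" using fin finite_lines by auto
  moreover have "l0 \<notin> (\<Union>y\<in>l0. ?F y)" by blast
  ultimately have "card L = Suc ((q+1) * q)" by (subst LU) (metis card_insert_disjoint)
  thus ?thesis by (simp add: algebra_simps)
qed

lemma card_lines_through_both:
  assumes "x \<in> P" "y \<in> P"
  shows "card {l\<in>L. x \<in> l \<and> y \<in> l} = (if x = y then q + 1 else 1)"
proof (cases "x = y")
  case True thus ?thesis using card_lines_through[OF assms(1)] by simp
next
  case False
  then obtain l where l: "l \<in> L \<and> x \<in> l \<and> y \<in> l"
    and u: "\<And>l'. l' \<in> L \<and> x \<in> l' \<and> y \<in> l' \<Longrightarrow> l' = l"
    using ex1_line[OF assms False] by metis
  have "{l\<in>L. x \<in> l \<and> y \<in> l} = {l}" using l u by blast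
  thus ?thesis using False by simp
qed

lemma card_points_on_both:
  assumes "l \<in> L" "m \<in> L"
  shows "card {x\<in>P. x \<in> l \<and> x \<in> m} = (if l = m then q + 1 else 1)"
proof (cases "l = m")
  case True
  hence "{x\<in>P. x \<in> l \<and> x \<in> m} = l" using line_subset assms by auto
  thus ?thesis using True card_line assms by simp
next
  case False
  then obtain x where x: "x \<in> P \<and> x \<in> l \<and> x \<in> m"
    and u: "\<And>y. y \<in> P \<and> y \<in> l \<and> y \<in> m \<Longrightarrow> y = x"
    using ex1_point[OF assms False] by metis
  have "{x\<in>P. x \<in> l \<and> x \<in> m} = {x}" using x u by blast
  thus ?thesis using False by simp
qed

end

section \<open>Adjacency entries of incidence graphs and doubled graphs\<close>

definition adj_entry :: "('v \<Rightarrow> 'v \<Rightarrow> bool) \<Rightarrow> 'v \<Rightarrow> 'v \<Rightarrow> real" where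
  "adj_entry adj u v = of_bool (adj u v)"

definition edge_entry :: "'v \<Rightarrow> 'v \<Rightarrow> 'v \<Rightarrow> 'v \<Rightarrow> real" where
  "edge_entry v0 v1 w z = of_bool (w = v0 \<and> z = v1 \<or> w = v1 \<and> z = v0)"

lemma adj_entry_double_adj:
  assumes "adj v0 v1" "adj v1 v0"
  shows "adj_entry (double_adj adj v0 v1) a b =
    (if fst a = fst b then adj_entry adj (snd a) (snd b) - edge_entry v0 v1 (snd a) (snd b)
     else edge_entry v0 v1 (snd a) (snd b))"
  using assms unfolding adj_entry_def edge_entry_def double_adj_def by (auto simp: doubleton_eq_iff)

lemma sum_adj_entry_double_adj_sq:
  assumes "adj v0 v1" "adj v1 v0"
  defines "A \<equiv> adj_entry adj" and "E \<equiv> edge_entry v0 v1" and "D \<equiv> adj_entry (double_adj adj v0 v1)"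
  shows "(\<Sum>c\<in>UNIV \<times> V. D (\<alpha>, w) c * D c (\<beta>, z)) =
    (if \<alpha> = \<beta> then (\<Sum>t\<in>V. A w t * A t z) - (\<Sum>t\<in>V. A w t * E t z) - (\<Sum>t\<in>V. E w t * A t z)
       + 2 * (\<Sum>t\<in>V. E w t * E t z)
     else (\<Sum>t\<in>V. A w t * E t z) + (\<Sum>t\<in>V. E w t * A t z) - 2 * (\<Sum>t\<in>V. E w t * E t z))"
proof -
  have "(\<Sum>c\<in>UNIV \<times> V. D (\<alpha>, w) c * D c (\<beta>, z)) =
      (\<Sum>\<gamma>\<in>UNIV. \<Sum>t\<in>V. D (\<alpha>, w) (\<gamma>, t) * D (\<gamma>, t) (\<beta>, z))"
    by (subst sum.cartesian_product) (simp add: case_prod_beta)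
  also have "\<dots> = (\<Sum>t\<in>V. D (\<alpha>, w) (True, t) * D (True, t) (\<beta>, z))
      + (\<Sum>t\<in>V. D (\<alpha>, w) (False, t) * D (False, t) (\<beta>, z))"
    by (simp add: UNIV_bool)
  finally show ?thesis unfolding D_def adj_entry_double_adj[of adj v0 v1, OF assms(1,2)] A_def[symmetric] E_def[symmetric]
    by (cases \<alpha>; cases \<beta>; simp add: algebra_simps sum.distrib sum_subtractf)
qed

lemma sum_mult_edge_entry:
  assumes "finite V" "v0 \<in> V" "v1 \<in> V" "v0 \<noteq> v1"
  shows "(\<Sum>t\<in>V. f t * edge_entry v0 v1 t z) = f v0 * of_bool (z = v1) + f v1 * of_bool (z = v0)"
proof -
  have "(\<Sum>t\<in>V. f t * edge_entry v0 v1 t z) =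
      (\<Sum>t\<in>V. if t = v0 then f t * of_bool (z = v1) else 0) + (\<Sum>t\<in>V. if t = v1 then f t * of_bool (z = v0) else 0)"
    unfolding sum.distrib[symmetric] using assms(4) by (intro sum.cong) (auto simp: edge_entry_def)
  thus ?thesis using assms(1-3) by simp
qed

lemma sum_edge_entry_mult:
  assumes "finite V" "v0 \<in> V" "v1 \<in> V" "v0 \<noteq> v1"
  shows "(\<Sum>t\<in>V. edge_entry v0 v1 w t * f t) = of_bool (w = v0) * f v1 + of_bool (w = v1) * f v0"
proof -
  have "(\<Sum>t\<in>V. edge_entry v0 v1 w t * f t) =
      (\<Sum>t\<in>V. if t = v1 then of_bool (w = v0) * f t else 0) + (\<Sum>t\<in>V. if t = v0 then of_bool (w = v1) * f t else 0)"
    unfolding sum.distrib[symmetric] using assms(4) by (intro sum.cong) (auto simp: edge_entry_def)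
  thus ?thesis using assms(1-3) by simp
qed

lemma double_adj_inc_adj_bipartite:
  assumes "double_adj inc_adj v0 v1 a b" "inc_adj v0 v1"
  shows "isl (snd a) \<noteq> isl (snd b)"
  using assms unfolding double_adj_def inc_adj_def by (cases a; cases b) auto

lemma inc_adj_simps [simp]:
  "inc_adj (Inl x) (Inr l) = (x \<in> l)" "inc_adj (Inr l) (Inl x) = (x \<in> l)"
  "\<not> inc_adj (Inl x) (Inl y)" "\<not> inc_adj (Inr l) (Inr m)"
  unfolding inc_adj_def by auto

lemma sum_inc_vertices:
  assumes "finite P" "finite L"
  shows "(\<Sum>t\<in>inc_vertices P L. h t) = (\<Sum>x\<in>P. h (Inl x)) + (\<Sum>l\<in>L. h (Inr l))"
proof -
  have "(\<Sum>t\<in>inc_vertices P L. h t) = (\<Sum>t\<in>Inl ` P. h t) + (\<Sum>t\<in>Inr ` L. h t)"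
    unfolding inc_vertices_def by (rule sum.union_disjoint, insert assms, auto)
  also have "\<dots> = (\<Sum>x\<in>P. h (Inl x)) + (\<Sum>l\<in>L. h (Inr l))"
    by (simp add: sum.reindex)
  finally show ?thesis .
qed

context proj_plane
begin

lemma finite_inc_vertices: "finite (inc_vertices P L)"
  using finite_points finite_lines unfolding inc_vertices_def by simp

lemma card_inc_vertices: "card (inc_vertices P L) = 2 * (q * q + q + 1)"
proof -
  have "card (inc_vertices P L) = card (Inl ` P :: ('p + 'p set) set) + card (Inr ` L :: ('p + 'p set) set)"
    unfolding inc_vertices_def by (rule card_Un_disjoint, insert finite_points finite_lines, auto)
  thus ?thesis using card_points card_lines by (simp add: card_image)
qed

lemma sum_adj_entry_inc_adj_sq:
  assumes w: "w \<in> inc_vertices P L" and z: "z \<in> inc_vertices P L"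
  shows "(\<Sum>t\<in>inc_vertices P L. adj_entry inc_adj w t * adj_entry inc_adj t z) = real q * of_bool (w = z)
     + of_bool (w \<in> Inl ` P \<and> z \<in> Inl ` P) + of_bool (w \<in> Inr ` L \<and> z \<in> Inr ` L)"
proof -
  note sum_V = sum_inc_vertices[OF finite_points finite_lines]
  from w z consider (pt_pt) x y where "x \<in> P" "y \<in> P" "w = Inl x" "z = Inl y"
    | (pt_ln) x m where "w = Inl x" "z = Inr m"
    | (ln_pt) l y where "w = Inr l" "z = Inl y"
    | (ln_ln) l m where "l \<in> L" "m \<in> L" "w = Inr l" "z = Inr m"
    unfolding inc_vertices_def by auto
  thus ?thesis
  proof cases
    case pt_pt
    have "{l\<in>L. x \<in> l \<and> y \<in> l} = L \<inter> {l. x \<in> l \<and> y \<in> l}" by blast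
    hence "(\<Sum>l\<in>L. of_bool (x \<in> l \<and> y \<in> l)) = real (card {l\<in>L. x \<in> l \<and> y \<in> l})"
      using finite_lines by (simp add: of_bool_def sum.If_cases)
    thus ?thesis using pt_pt card_lines_through_both[OF pt_pt(1,2)]
      unfolding sum_V by (auto simp: adj_entry_def of_bool_conj)
  next
    case ln_ln
    have "{x\<in>P. x \<in> l \<and> x \<in> m} = P \<inter> {x. x \<in> l \<and> x \<in> m}" by blast
    hence "(\<Sum>x\<in>P. of_bool (x \<in> l \<and> x \<in> m)) = real (card {x\<in>P. x \<in> l \<and> x \<in> m})"
      using finite_points by (simp add: of_bool_def sum.If_cases)
    thus ?thesis using ln_ln card_points_on_both[OF ln_ln(1,2)]
      unfolding sum_V by (auto simp: adj_entry_def of_bool_conj)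
  qed (auto simp: sum_V adj_entry_def)
qed

end

section \<open>The spectrum polynomial and its median roots\<close>

definition hl_cubic :: "real \<Rightarrow> real poly" where
  "hl_cubic Q = [: Q\<^sup>2 - Q, -3 * Q, 1 - Q, 1 :]"

definition hl_cubic_reflect :: "real \<Rightarrow> real poly" where
  "hl_cubic_reflect Q = [: -(Q\<^sup>2 - Q), -3 * Q, Q - 1, 1 :]"

lemma poly_hl_cubic: "poly (hl_cubic Q) x = x ^ 3 + (1 - Q) * x\<^sup>2 - 3 * Q * x + Q\<^sup>2 - Q"
  unfolding hl_cubic_def by (simp add: algebra_simps power2_eq_square power3_eq_cube)

lemma poly_hl_cubic_reflect: "poly (hl_cubic_reflect Q) x = - poly (hl_cubic Q) (- x)"
  unfolding hl_cubic_def hl_cubic_reflect_def by (simp add: algebra_simps power2_eq_square power3_eq_cube)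

lemma poly_hl_cubic_mult_reflect:
  "poly (hl_cubic Q) x * poly (hl_cubic_reflect Q) x
    = (x\<^sup>2 - Q) ^ 3 - (Q\<^sup>2 + Q + 1) * (x\<^sup>2 - Q)\<^sup>2 + 4 * Q ^ 3"
  unfolding hl_cubic_def hl_cubic_reflect_def by (simp add: algebra_simps power2_eq_square power3_eq_cube)

lemma sqrt_bounds_of_ge_2:
  fixes Q :: real
  assumes Q: "Q \<ge> 2"
  shows "1 < sqrt Q" "sqrt Q < Q" "1 \<le> sqrt (Q - 1)" "sqrt (Q - 1) \<le> sqrt Q"
proof -
  have "2 * Q \<le> Q * Q" using Q by (intro mult_right_mono) auto
  thus "sqrt Q < Q" using Q by (intro real_less_lsqrt) (auto simp: power2_eq_square)
qed (use Q in auto)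

lemma hl_cubic_signs:
  fixes Q :: real
  assumes Q: "Q \<ge> 2"
  shows "poly (hl_cubic Q) (- 3 * Q) < 0" "poly (hl_cubic Q) (- sqrt Q) > 0"
    "poly (hl_cubic Q) (sqrt (Q - 1) - 1) > 0" "poly (hl_cubic Q) (sqrt Q - 1) < 0"
    "poly (hl_cubic Q) (sqrt Q) < 0" "poly (hl_cubic Q) (3 * Q) > 0"
proof -
  define s where "s = sqrt Q"
  define u where "u = sqrt (Q - 1)"
  have s2: "Q = s\<^sup>2" and s1: "s > 1" unfolding s_def using Q by simp_all
  have u2: "Q = u\<^sup>2 + 1" unfolding u_def using Q by simp
  have "s < Q" using s1 s2 by (simp add: power2_eq_square)
  moreover have "poly (hl_cubic Q) (s - 1) = s - Q" "poly (hl_cubic Q) (- s) = 2 * Q * s"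
    "poly (hl_cubic Q) s = - 2 * Q * s"
    unfolding poly_hl_cubic s2 by (simp_all add: algebra_simps power2_eq_square power3_eq_cube)
  moreover have "poly (hl_cubic Q) (u - 1) = 2"
    unfolding poly_hl_cubic u2 by (simp add: algebra_simps power2_eq_square power3_eq_cube)
  moreover have "poly (hl_cubic Q) (- 3 * Q) = Q * (- 36 * Q\<^sup>2 + 19 * Q - 1)"
    "poly (hl_cubic Q) (3 * Q) = Q * (18 * Q\<^sup>2 + Q - 1)"
    unfolding poly_hl_cubic by (simp_all add: algebra_simps power2_eq_square power3_eq_cube)
  moreover have "Q * (- 36 * Q\<^sup>2 + 19 * Q - 1) < 0" "Q * (18 * Q\<^sup>2 + Q - 1) > 0"
  proof -
    have "Q * Q \<ge> 2 * Q" using Q by (intro mult_right_mono) auto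
    hence "- 36 * Q\<^sup>2 + 19 * Q - 1 < 0" "18 * Q\<^sup>2 + Q - 1 > 0"
      using Q unfolding power2_eq_square by linarith+
    thus "Q * (- 36 * Q\<^sup>2 + 19 * Q - 1) < 0" "Q * (18 * Q\<^sup>2 + Q - 1) > 0"
      using Q by (simp_all add: mult_pos_neg)
  qed
  ultimately show "poly (hl_cubic Q) (- 3 * Q) < 0" "poly (hl_cubic Q) (- sqrt Q) > 0"
    "poly (hl_cubic Q) (sqrt (Q - 1) - 1) > 0" "poly (hl_cubic Q) (sqrt Q - 1) < 0"
    "poly (hl_cubic Q) (sqrt Q) < 0" "poly (hl_cubic Q) (3 * Q) > 0"
    using Q s1 unfolding s_def u_def by auto
qed

lemma hl_cubic_roots:
  fixes Q :: real
  assumes Q: "Q \<ge> 2"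
  obtains a R b where "a < - sqrt Q" "sqrt (Q - 1) - 1 < R" "R < sqrt Q - 1" "sqrt Q < b"
    "poly (hl_cubic Q) a = 0" "poly (hl_cubic Q) R = 0" "poly (hl_cubic Q) b = 0"
proof -
  note signs = hl_cubic_signs[OF Q]
  have cont: "continuous_on {x..y} (poly (hl_cubic Q))" for x y by (intro continuous_intros)
  have s: "1 < sqrt Q" "sqrt Q < 3 * Q" "sqrt (Q - 1) \<le> sqrt Q" using sqrt_bounds_of_ge_2[OF Q] by auto
  obtain a where a: "- 3 * Q \<le> a" "a \<le> - sqrt Q" "poly (hl_cubic Q) a = 0"
    using IVT'[of "poly (hl_cubic Q)" "- 3 * Q" 0 "- sqrt Q", OF _ _ _ cont] signs s by force
  obtain R where R: "sqrt (Q - 1) - 1 \<le> R" "R \<le> sqrt Q - 1" "poly (hl_cubic Q) R = 0"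
    using IVT2'[of "poly (hl_cubic Q)" "sqrt Q - 1" 0 "sqrt (Q - 1) - 1", OF _ _ _ cont] signs s by force
  obtain b where b: "sqrt Q \<le> b" "b \<le> 3 * Q" "poly (hl_cubic Q) b = 0"
    using IVT'[of "poly (hl_cubic Q)" "sqrt Q" 0 "3 * Q", OF _ _ _ cont] signs s by force
  have "a \<noteq> - sqrt Q" "R \<noteq> sqrt (Q - 1) - 1" "R \<noteq> sqrt Q - 1" "b \<noteq> sqrt Q"
    using a R b signs by auto
  thus ?thesis using a R b that by force
qed

lemma proots_eq_of_three_roots:
  fixes p :: "'a :: idom poly"
  assumes p: "p \<noteq> 0" and d: "degree p \<le> 3" and r: "r1 \<noteq> r2" "r1 \<noteq> r3" "r2 \<noteq> r3"
    and roots: "poly p r1 = 0" "poly p r2 = 0" "poly p r3 = 0"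
  shows "proots p = {#r1, r2, r3#}"
proof -
  let ?A = "{#r1, r2, r3#}"
  have sub: "?A \<subseteq># proots p"
  proof (rule mset_subset_eqI)
    fix x
    have "count ?A x \<le> 1" using r by auto
    moreover have "count ?A x \<noteq> 0 \<Longrightarrow> order x p \<ge> 1"
      using roots p order_root[of p x] by (auto split: if_splits)
    ultimately show "count ?A x \<le> count (proots p) x" using p
      by (cases "count ?A x = 0") auto
  qed
  have "size (proots p) \<le> 3" using size_proots_le[of p] d by simp
  hence "size (proots p - ?A) = 0" using size_Diff_submset[OF sub] by simp
  hence "proots p - ?A = {#}" by simp
  thus ?thesis using sub by (metis subset_mset.diff_add add_cancel_right_left)
qed

lemma sorted_nth_eq_of_count_less:
  fixes xs :: "'a :: linorder list"
  assumes "sorted xs" "r \<in> set xs" "length (filter (\<lambda>x. x < r) xs) = i"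
  shows "xs ! i = r"
  using assms
proof (induction xs arbitrary: i)
  case (Cons y ys)
  show ?case
  proof (cases "y < r")
    case True
    then obtain j where j: "i = Suc j" "length (filter (\<lambda>x. x < r) ys) = j" using Cons.prems by auto
    thus ?thesis using Cons.IH[of j] Cons.prems True by auto
  next
    case False
    have "\<forall>z\<in>set ys. y \<le> z" using Cons.prems(1) by auto
    hence "y = r" and "filter (\<lambda>x. x < r) (y # ys) = []"
      using Cons.prems(2) False by (auto simp: filter_empty_conv)
    thus ?thesis using Cons.prems(3) by simp
  qed
qed simp

lemma sorted_list_of_multiset_nth_eq:
  fixes M :: "'a :: linorder multiset"
  assumes "r \<in># M" "size (filter_mset (\<lambda>x. x < r) M) = i"
  shows "sorted_list_of_multiset M ! i = r"
proof (rule sorted_nth_eq_of_count_less)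
  have "mset (filter (\<lambda>x. x < r) (sorted_list_of_multiset M)) = filter_mset (\<lambda>x. x < r) M"
    by (simp add: mset_filter)
  thus "length (filter (\<lambda>x. x < r) (sorted_list_of_multiset M)) = i"
    using assms(2) by (metis size_mset)
qed (use assms(1) in simp_all)

lemma filter_mset_replicate_mset:
  "filter_mset P (replicate_mset n x) = (if P x then replicate_mset n x else {#})"
  by (induction n) auto

definition spectrum_poly :: "real \<Rightarrow> nat \<Rightarrow> real poly" where
  "spectrum_poly Q m = [:-(Q+1), 1:] * [:Q+1, 1:] * ([:-sqrt Q, 1:] * [:sqrt Q, 1:]) ^ m
     * hl_cubic Q * hl_cubic_reflect Q"

lemma poly_spectrum_poly:
  "Q \<ge> 0 \<Longrightarrow> poly (spectrum_poly Q m) x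
    = (x\<^sup>2 - (Q+1)\<^sup>2) * (x\<^sup>2 - Q) ^ m * (poly (hl_cubic Q) x * poly (hl_cubic_reflect Q) x)"
  unfolding spectrum_poly_def by (simp add: poly_power algebra_simps power2_eq_square)

lemma lead_coeff_spectrum_poly: "lead_coeff (spectrum_poly Q m) = 1"
  unfolding spectrum_poly_def lead_coeff_mult lead_coeff_power
  by (simp add: hl_cubic_def hl_cubic_reflect_def)

lemma proots_spectrum_poly:
  assumes Q: "Q \<ge> 2" and roots: "poly (hl_cubic Q) a = 0" "poly (hl_cubic Q) R = 0" "poly (hl_cubic Q) b = 0"
    and distinct: "a \<noteq> R" "a \<noteq> b" "R \<noteq> b"
  shows "proots (spectrum_poly Q m) = {#Q+1, -(Q+1)#} + replicate_mset m (sqrt Q)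
    + replicate_mset m (- sqrt Q) + {#a, R, b#} + {#-a, -R, -b#}"
proof -
  have nz: "hl_cubic Q \<noteq> 0" "hl_cubic_reflect Q \<noteq> 0" "[:-sqrt Q, 1:] * [:sqrt Q, 1:] \<noteq> 0"
    unfolding hl_cubic_def hl_cubic_reflect_def by auto
  have deg: "degree (hl_cubic Q) \<le> 3" "degree (hl_cubic_reflect Q) \<le> 3"
    unfolding hl_cubic_def hl_cubic_reflect_def by simp_all
  have "proots (hl_cubic Q) = {#a, R, b#}"
    using distinct roots by (intro proots_eq_of_three_roots[OF nz(1) deg(1)]) auto
  moreover have "proots (hl_cubic_reflect Q) = {#-a, -R, -b#}"
    using distinct roots
    by (intro proots_eq_of_three_roots[OF nz(2) deg(2)]) (auto simp: poly_hl_cubic_reflect)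
  moreover have "proots (([:-sqrt Q, 1:] * [:sqrt Q, 1:]) ^ m) = repeat_mset m {#sqrt Q, - sqrt Q#}"
    unfolding proots_power by (subst proots_mult) auto
  ultimately show ?thesis unfolding spectrum_poly_def
    by (simp only: proots_mult mult_eq_0_iff power_eq_0_iff nz pCons_eq_0_iff one_neq_zero simp_thms)
      (simp add: add_ac)
qed

text \<open>Eigenvalues are listed in non-increasing order, so the median pair sits at positions
  \<open>m + 3\<close> and \<open>m + 4\<close> (counting from 0) of the \<open>2m + 8\<close> roots.\<close>
lemma spectrum_poly_median_roots:
  assumes Q: "Q \<ge> 2"
  obtains R where "sqrt (Q - 1) - 1 < R" "R < sqrt Q - 1" "poly (hl_cubic Q) R = 0"
    "rev (sorted_list_of_multiset (proots (spectrum_poly Q m))) ! (m + 3) = R"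
    "rev (sorted_list_of_multiset (proots (spectrum_poly Q m))) ! (m + 4) = - R"
proof -
  obtain a R b where abR: "a < - sqrt Q" "sqrt (Q - 1) - 1 < R" "R < sqrt Q - 1" "sqrt Q < b"
     "poly (hl_cubic Q) a = 0" "poly (hl_cubic Q) R = 0" "poly (hl_cubic Q) b = 0"
    using hl_cubic_roots[OF Q] by blast
  note s = sqrt_bounds_of_ge_2[OF Q]
  hence R0: "R > 0" using abR(2) by linarith
  have "a \<noteq> R" "a \<noteq> b" "R \<noteq> b" using abR R0 s by linarith+
  let ?M = "proots (spectrum_poly Q m)"
  have M: "?M = {#Q+1, -(Q+1)#} + replicate_mset m (sqrt Q) + replicate_mset m (- sqrt Q)
      + {#a, R, b#} + {#-a, -R, -b#}"
    using abR \<open>a \<noteq> R\<close> \<open>a \<noteq> b\<close> \<open>R \<noteq> b\<close> by (intro proots_spectrum_poly[OF Q])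
  have "size ?M = 2 * m + 8" by (simp add: M)
  hence len: "length (sorted_list_of_multiset ?M) = 2 * m + 8"
    by (metis mset_sorted_list_of_multiset size_mset)
  have ord: "a < - sqrt Q" "- sqrt Q < - R" "- R < R" "R < sqrt Q" "sqrt Q < b" "sqrt Q < Q + 1"
    using abR R0 s by linarith+
  have "sorted_list_of_multiset ?M ! (m + 4) = R"
    by (intro sorted_list_of_multiset_nth_eq) (use ord in \<open>auto simp: M filter_mset_replicate_mset\<close>)
  moreover have "sorted_list_of_multiset ?M ! (m + 3) = - R"
    by (intro sorted_list_of_multiset_nth_eq) (use ord in \<open>auto simp: M filter_mset_replicate_mset\<close>)
  ultimately show ?thesis using abR that len by (simp add: rev_nth add.commute)
qed

lemma poly_eq_of_eq_on_ray:
  fixes p r :: "real poly"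
  assumes "\<And>x. x > t \<Longrightarrow> poly p x = poly r x"
  shows "p = r"
proof (rule ccontr)
  assume "p \<noteq> r"
  hence "finite {x. poly (p - r) x = 0}" by (intro poly_roots_finite) simp
  moreover have "{t<..} \<subseteq> {x. poly (p - r) x = 0}" using assms by auto
  ultimately show False using infinite_Ioi finite_subset by blast
qed

section \<open>The characteristic polynomial of the doubled incidence graph\<close>

definition copy_ind :: "'v set \<Rightarrow> real \<Rightarrow> bool \<times> 'v \<Rightarrow> real" where
  "copy_ind S s a = (if snd a \<in> S then (if fst a then 1 else s) else 0)"

definition copy_comb :: "real \<Rightarrow> 'v set \<Rightarrow> real \<Rightarrow> real \<Rightarrow> 'v set \<Rightarrow> real \<Rightarrow> bool \<times> 'v \<Rightarrow> real" where
  "copy_comb \<alpha> S s \<beta> S' s' c = \<alpha> * copy_ind S s c + \<beta> * copy_ind S' s' c"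

lemma sum_copy_ind_mult:
  assumes fin: "finite V" and S: "S \<subseteq> V" and T: "T \<subseteq> V"
  shows "(\<Sum>c\<in>UNIV \<times> V. copy_ind S s c * copy_ind T t c) = (1 + s * t) * real (card (S \<inter> T))"
proof -
  have "(\<Sum>c\<in>UNIV \<times> V. copy_ind S s c * copy_ind T t c) = (\<Sum>\<gamma>\<in>UNIV. \<Sum>w\<in>V. copy_ind S s (\<gamma>, w) * copy_ind T t (\<gamma>, w))"
    by (subst sum.cartesian_product, simp add: case_prod_beta)
  also have "\<dots> = (\<Sum>w\<in>V. (1 + s * t) * of_bool (w \<in> S \<inter> T))"
    by (simp add: UNIV_bool copy_ind_def sum.distrib[symmetric], intro sum.cong, auto)
  also have "\<dots> = (1 + s * t) * (\<Sum>w\<in>V. of_bool (w \<in> S \<inter> T))"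
    by (simp add: sum_distrib_left)
  also have "(\<Sum>w\<in>V. of_bool (w \<in> S \<inter> T) :: real) = real (card (S \<inter> T))"
  proof -
    have "V \<inter> {w. w \<in> S \<inter> T} = S \<inter> T" using S T by auto
    thus ?thesis using fin by (simp add: of_bool_def sum.If_cases)
  qed
  finally show ?thesis .
qed

lemma sum_copy_comb_mult:
  assumes "finite V" and "S \<subseteq> V" "S' \<subseteq> V" and "T \<subseteq> V"
  shows "(\<Sum>c\<in>UNIV \<times> V. copy_comb \<alpha> S s \<beta> S' s' c * copy_ind T t c)
     = \<alpha> * ((1 + s * t) * real (card (S \<inter> T))) + \<beta> * ((1 + s' * t) * real (card (S' \<inter> T)))"
proof -
  have "(\<Sum>c\<in>UNIV \<times> V. copy_comb \<alpha> S s \<beta> S' s' c * copy_ind T t c)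
    = \<alpha> * (\<Sum>c\<in>UNIV \<times> V. copy_ind S s c * copy_ind T t c)
      + \<beta> * (\<Sum>c\<in>UNIV \<times> V. copy_ind S' s' c * copy_ind T t c)"
    unfolding copy_comb_def by (simp add: sum.distrib sum_distrib_left algebra_simps)
  thus ?thesis using sum_copy_ind_mult[OF assms(1,2,4)] sum_copy_ind_mult[OF assms(1,3,4)] by simp
qed

locale plane_flag = proj_plane +
  fixes p0 :: 'p and l0 :: "'p set"
  assumes flag_line: "l0 \<in> L" and flag_point: "p0 \<in> l0"
begin

lemma flag_line_subset: "l0 \<subseteq> P"
  using line_subset[OF flag_line] .

lemma flag_point_in: "p0 \<in> P"
  using flag_line_subset flag_point by auto

lemma flag_vertices [simp]: "Inl p0 \<in> inc_vertices P L" "Inr l0 \<in> inc_vertices P L"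
  using flag_point_in flag_line unfolding inc_vertices_def by auto

lemma adj_entry_flag:
  assumes "w \<in> inc_vertices P L"
  shows "adj_entry inc_adj w (Inl p0) = of_bool (w \<in> Inr ` {l\<in>L. p0 \<in> l})"
    and "adj_entry inc_adj (Inl p0) w = of_bool (w \<in> Inr ` {l\<in>L. p0 \<in> l})"
    and "adj_entry inc_adj w (Inr l0) = of_bool (w \<in> Inl ` l0)"
    and "adj_entry inc_adj (Inr l0) w = of_bool (w \<in> Inl ` l0)"
  using assms flag_line_subset unfolding inc_vertices_def adj_entry_def by auto

lemma sum_adj_entry_edge_entry:
  assumes "w \<in> inc_vertices P L"
  shows "(\<Sum>t\<in>inc_vertices P L. adj_entry inc_adj w t * edge_entry (Inl p0) (Inr l0) t z)
      = of_bool (w \<in> Inr ` {l\<in>L. p0 \<in> l} \<and> z = Inr l0) + of_bool (w \<in> Inl ` l0 \<and> z = Inl p0)"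
    and "(\<Sum>t\<in>inc_vertices P L. edge_entry (Inl p0) (Inr l0) z t * adj_entry inc_adj t w)
      = of_bool (z = Inl p0 \<and> w \<in> Inl ` l0) + of_bool (z = Inr l0 \<and> w \<in> Inr ` {l\<in>L. p0 \<in> l})"
  using assms
  by (simp_all add: sum_mult_edge_entry sum_edge_entry_mult finite_inc_vertices adj_entry_flag of_bool_conj)

lemma sum_edge_entry_sq:
  "(\<Sum>t\<in>inc_vertices P L. edge_entry (Inl p0) (Inr l0) w t * edge_entry (Inl p0) (Inr l0) t z)
    = of_bool (w = Inl p0 \<and> z = Inl p0) + of_bool (w = Inr l0 \<and> z = Inr l0)"
  by (simp add: sum_mult_edge_entry finite_inc_vertices edge_entry_def of_bool_conj)

definition sq_rest :: "bool \<times> ('p + 'p set) \<Rightarrow> bool \<times> ('p + 'p set) \<Rightarrow> real" where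
  "sq_rest a b =
     copy_ind (Inl ` P) 1 a * copy_ind (Inl ` P) 1 b / 2 + copy_ind (Inr ` L) 1 a * copy_ind (Inr ` L) 1 b / 2
   + (copy_ind (Inl ` P) (-1) a * copy_ind (Inl ` P) (-1) b / 2
      - copy_ind (Inl ` l0) (-1) a * copy_ind {Inl p0} (-1) b
      + copy_ind {Inl p0} (-1) a * (- copy_ind (Inl ` l0) (-1) b + 2 * copy_ind {Inl p0} (-1) b))
   + (copy_ind (Inr ` L) (-1) a * copy_ind (Inr ` L) (-1) b / 2
      - copy_ind (Inr ` {l\<in>L. p0 \<in> l}) (-1) a * copy_ind {Inr l0} (-1) b
      + copy_ind {Inr l0} (-1) a * (- copy_ind (Inr ` {l\<in>L. p0 \<in> l}) (-1) b + 2 * copy_ind {Inr l0} (-1) b))"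

lemma sum_double_adj_sq:
  assumes w: "w \<in> inc_vertices P L" and z: "z \<in> inc_vertices P L"
  shows "(\<Sum>c\<in>double_vertices (inc_vertices P L).
            adj_entry (double_adj inc_adj (Inl p0) (Inr l0)) (\<alpha>, w) c
          * adj_entry (double_adj inc_adj (Inl p0) (Inr l0)) c (\<beta>, z))
    = real q * of_bool ((\<alpha>, w) = (\<beta>, z)) + sq_rest (\<alpha>, w) (\<beta>, z)"
proof -
  have flag_adj: "inc_adj (Inl p0) (Inr l0)" "inc_adj (Inr l0) (Inl p0)" using flag_point by auto
  note sums = sum_adj_entry_double_adj_sq[of inc_adj, OF flag_adj] sum_adj_entry_inc_adj_sq[OF w z]
    sum_adj_entry_edge_entry[OF w] sum_adj_entry_edge_entry(2)[OF z] sum_edge_entry_sq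
  note facts = flag_line_subset flag_point_in flag_line
  from w z consider (pt_pt) x y where "w = Inl x" "z = Inl y" "x \<in> P" "y \<in> P"
    | (pt_ln) x m where "w = Inl x" "z = Inr m" "x \<in> P" "m \<in> L"
    | (ln_pt) l y where "w = Inr l" "z = Inl y" "l \<in> L" "y \<in> P"
    | (ln_ln) l m where "w = Inr l" "z = Inr m" "l \<in> L" "m \<in> L"
    unfolding inc_vertices_def by auto
  thus ?thesis
    unfolding double_vertices_def sums sq_rest_def
    by cases (use facts in \<open>cases \<alpha>; cases \<beta>; auto simp: copy_ind_def\<close>)+
qed

text \<open>The four pieces of \<open>sq_rest\<close>, each as a sum of products \<open>u\<^sub>r a * w\<^sub>r b\<close>: parts
  symmetric and alternating between the two copies, on points and on lines.\<close>
definition "pts_sym_u = (\<lambda>r::nat. copy_ind (Inl ` P) 1)"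
definition "pts_sym_w = (\<lambda>r::nat. copy_comb (1/2) (Inl ` P) 1 0 (Inl ` P) 1)"
definition "lns_sym_u = (\<lambda>r::nat. copy_ind (Inr ` L) 1)"
definition "lns_sym_w = (\<lambda>r::nat. copy_comb (1/2) (Inr ` L) 1 0 (Inr ` L) 1)"
definition "pts_alt_u = (\<lambda>r::nat. if r = 0 then copy_ind (Inl ` P) (-1)
    else if r = 1 then copy_ind (Inl ` l0) (-1) else copy_ind {Inl p0} (-1))"
definition "pts_alt_w = (\<lambda>r::nat. if r = 0 then copy_comb (1/2) (Inl ` P) (-1) 0 (Inl ` P) (-1)
    else if r = 1 then copy_comb (-1) {Inl p0} (-1) 0 {Inl p0} (-1)
    else copy_comb (-1) (Inl ` l0) (-1) 2 {Inl p0} (-1))"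
definition "lns_alt_u = (\<lambda>r::nat. if r = 0 then copy_ind (Inr ` L) (-1)
    else if r = 1 then copy_ind (Inr ` {l\<in>L. p0 \<in> l}) (-1) else copy_ind {Inr l0} (-1))"
definition "lns_alt_w = (\<lambda>r::nat. if r = 0 then copy_comb (1/2) (Inr ` L) (-1) 0 (Inr ` L) (-1)
    else if r = 1 then copy_comb (-1) {Inr l0} (-1) 0 {Inr l0} (-1)
    else copy_comb (-1) (Inr ` {l\<in>L. p0 \<in> l}) (-1) 2 {Inr l0} (-1))"

lemma sq_rest_decomp:
  "sq_rest a b = (\<Sum>r<1. pts_sym_u r a * pts_sym_w r b) + ((\<Sum>r<1. lns_sym_u r a * lns_sym_w r b)
     + ((\<Sum>r<3. pts_alt_u r a * pts_alt_w r b) + (\<Sum>r<3. lns_alt_u r a * lns_alt_w r b)))"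
  by (simp add: sq_rest_def pts_sym_u_def pts_sym_w_def lns_sym_u_def lns_sym_w_def pts_alt_u_def
      pts_alt_w_def lns_alt_u_def lns_alt_w_def copy_comb_def numeral_3_eq_3 algebra_simps)

end

locale enumerated_plane_flag = plane_flag +
  fixes xs
  assumes distinct_enum: "distinct xs"
    and set_enum: "set xs = double_vertices (inc_vertices P L)"
begin

lemma inc_vertices_subsets [simp]:
  "Inl ` P \<subseteq> inc_vertices P L" "Inr ` L \<subseteq> inc_vertices P L" "Inl ` l0 \<subseteq> inc_vertices P L"
  "Inr ` {l\<in>L. p0 \<in> l} \<subseteq> inc_vertices P L" "{Inl p0} \<subseteq> inc_vertices P L" "{Inr l0} \<subseteq> inc_vertices P L"
  using flag_line_subset flag_point_in flag_line unfolding inc_vertices_def by auto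

lemma sum_enum_copy_comb_mult [simp]:
  "S \<subseteq> inc_vertices P L \<Longrightarrow> S' \<subseteq> inc_vertices P L \<Longrightarrow> T \<subseteq> inc_vertices P L \<Longrightarrow>
  (\<Sum>c\<in>set xs. copy_comb \<alpha> S s \<beta> S' s' c * copy_ind T t c) =
     \<alpha> * ((1 + s * t) * real (card (S \<inter> T))) + \<beta> * ((1 + s' * t) * real (card (S' \<inter> T)))"
  unfolding set_enum double_vertices_def by (rule sum_copy_comb_mult[OF finite_inc_vertices])

lemma card_flag_sets [simp]:
  "card (Inl ` P) = q * q + q + 1" "card (Inr ` L) = q * q + q + 1"
  "card (Inl ` l0) = q + 1" "card (Inr ` {l\<in>L. p0 \<in> l}) = q + 1"
  using card_points card_lines card_line[OF flag_line] card_lines_through[OF flag_point_in]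
  by (auto simp: card_image)

lemma flag_set_inters [simp]:
  "Inl ` A \<inter> Inr ` B = {}" "Inr ` B \<inter> Inl ` A = {}"
  "Inl ` A \<inter> Inl ` A' = Inl ` (A \<inter> A')" "Inr ` C \<inter> Inr ` D = Inr ` (C \<inter> D)"
  "P \<inter> l0 = l0" "l0 \<inter> P = l0" "L \<inter> {l\<in>L. p0 \<in> l} = {l\<in>L. p0 \<in> l}"
  "{l\<in>L. p0 \<in> l} \<inter> L = {l\<in>L. p0 \<in> l}"
  using flag_line_subset by auto

abbreviation "pts_sym \<equiv> lowrank_mat xs 1 pts_sym_u pts_sym_w"
abbreviation "lns_sym \<equiv> lowrank_mat xs 1 lns_sym_u lns_sym_w"
abbreviation "pts_alt \<equiv> lowrank_mat xs 3 pts_alt_u pts_alt_w"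
abbreviation "lns_alt \<equiv> lowrank_mat xs 3 lns_alt_u lns_alt_w"

lemma index_mat_sq_rest: "index_mat xs sq_rest = pts_sym + (lns_sym + (pts_alt + lns_alt))"
  unfolding lowrank_mat_def index_mat_add by (rule index_mat_cong, simp add: sq_rest_decomp)

lemma lowrank_pieces_mult_eq_zero:
  "pts_sym * lns_sym = 0\<^sub>m (length xs) (length xs)" "pts_sym * pts_alt = 0\<^sub>m (length xs) (length xs)"
  "pts_sym * lns_alt = 0\<^sub>m (length xs) (length xs)" "lns_sym * pts_alt = 0\<^sub>m (length xs) (length xs)"
  "lns_sym * lns_alt = 0\<^sub>m (length xs) (length xs)" "pts_alt * lns_alt = 0\<^sub>m (length xs) (length xs)"
  by (rule lowrank_mat_mult_eq_zero[OF distinct_enum],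
      auto simp: pts_sym_w_def lns_sym_w_def pts_alt_w_def lns_sym_u_def pts_alt_u_def lns_alt_u_def
        flag_point_in flag_line)+

abbreviation plane_size :: real where "plane_size \<equiv> real (q * q + q + 1)"

abbreviation rest_cubic :: "real \<Rightarrow> real" where
  "rest_cubic y \<equiv> y ^ 3 - plane_size * y\<^sup>2 + 4 * real q ^ 3"

lemma length_enum: "length xs = 4 * (q * q + q + 1)"
  using distinct_card[OF distinct_enum] card_inc_vertices
  unfolding set_enum double_vertices_def card_cartesian_product by simp

lemma det_char_sym_pieces:
  assumes y: "y \<noteq> 0"
  shows "det (y \<cdot>\<^sub>m 1\<^sub>m (length xs) - pts_sym) = y ^ (length xs - 1) * (y - plane_size)"
    and "det (y \<cdot>\<^sub>m 1\<^sub>m (length xs) - lns_sym) = y ^ (length xs - 1) * (y - plane_size)"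
proof -
  have raw: "y ^ 1 * det (y \<cdot>\<^sub>m 1\<^sub>m (length xs) - pts_sym) = y ^ length xs * (y - plane_size)"
    "y ^ 1 * det (y \<cdot>\<^sub>m 1\<^sub>m (length xs) - lns_sym) = y ^ length xs * (y - plane_size)"
    unfolding det_char_lowrank_mat[OF distinct_enum y] char_gram_mat det_mat1
    by (simp_all add: pts_sym_u_def pts_sym_w_def lns_sym_u_def lns_sym_w_def) (simp_all add: field_simps)
  show "det (y \<cdot>\<^sub>m 1\<^sub>m (length xs) - pts_sym) = y ^ (length xs - 1) * (y - plane_size)"
    and "det (y \<cdot>\<^sub>m 1\<^sub>m (length xs) - lns_sym) = y ^ (length xs - 1) * (y - plane_size)"
    by (rule mult_power_cancel[OF y _ raw(1)] mult_power_cancel[OF y _ raw(2)], simp add: length_enum)+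
qed

lemma det_char_alt_pieces:
  assumes y: "y \<noteq> 0"
  shows "det (y \<cdot>\<^sub>m 1\<^sub>m (length xs) - pts_alt) = y ^ (length xs - 3) * rest_cubic y"
    and "det (y \<cdot>\<^sub>m 1\<^sub>m (length xs) - lns_alt) = y ^ (length xs - 3) * rest_cubic y"
proof -
  have raw: "y ^ 3 * det (y \<cdot>\<^sub>m 1\<^sub>m (length xs) - pts_alt) = y ^ length xs * rest_cubic y"
    "y ^ 3 * det (y \<cdot>\<^sub>m 1\<^sub>m (length xs) - lns_alt) = y ^ length xs * rest_cubic y"
    unfolding det_char_lowrank_mat[OF distinct_enum y] char_gram_mat det_mat3
    using flag_point flag_point_in flag_line
    by (simp_all add: pts_alt_u_def pts_alt_w_def lns_alt_u_def lns_alt_w_def)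
      (simp_all add: field_simps power2_eq_square power3_eq_cube)
  show "det (y \<cdot>\<^sub>m 1\<^sub>m (length xs) - pts_alt) = y ^ (length xs - 3) * rest_cubic y"
    and "det (y \<cdot>\<^sub>m 1\<^sub>m (length xs) - lns_alt) = y ^ (length xs - 3) * rest_cubic y"
    by (rule mult_power_cancel[OF y _ raw(1)] mult_power_cancel[OF y _ raw(2)], simp add: length_enum)+
qed

lemma det_char_sq_rest:
  assumes y: "y \<noteq> 0"
  shows "det (y \<cdot>\<^sub>m 1\<^sub>m (length xs) - index_mat xs sq_rest)
    = y ^ (length xs - 8) * ((y - plane_size)\<^sup>2 * (rest_cubic y)\<^sup>2)"
proof -
  let ?n = "length xs"
  have n: "?n \<ge> 8" unfolding length_enum using order_ge_1 by simp
  have carrier: "pts_sym \<in> carrier_mat ?n ?n" "lns_sym \<in> carrier_mat ?n ?n"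
    "pts_alt \<in> carrier_mat ?n ?n" "lns_alt \<in> carrier_mat ?n ?n" by simp_all
  note zero = lowrank_pieces_mult_eq_zero
  note sym = det_char_sym_pieces[OF y] and alt = det_char_alt_pieces[OF y]
  have "det (y \<cdot>\<^sub>m 1\<^sub>m ?n - (pts_alt + lns_alt)) = y ^ (?n - (3 + 3)) * (rest_cubic y * rest_cubic y)"
    using n by (intro det_char_add_of_mult_zero_power[OF carrier(3,4) zero(6) y _ alt]) auto
  moreover have "lns_sym * (pts_alt + lns_alt) = 0\<^sub>m ?n ?n"
    using mult_add_distrib_mat[OF carrier(2-4)] zero by simp
  ultimately have "det (y \<cdot>\<^sub>m 1\<^sub>m ?n - (lns_sym + (pts_alt + lns_alt))) = y ^ (?n - (1 + (3 + 3)))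
      * ((y - plane_size) * (rest_cubic y * rest_cubic y))"
    using n carrier by (intro det_char_add_of_mult_zero_power[OF _ _ _ y _ sym(2)]) auto
  moreover have "pts_sym * (lns_sym + (pts_alt + lns_alt)) = 0\<^sub>m ?n ?n"
    using mult_add_distrib_mat[OF carrier(1,2) add_carrier_mat[OF carrier(4), of pts_alt]]
      mult_add_distrib_mat[OF carrier(1,3,4)] zero by simp
  ultimately have "det (y \<cdot>\<^sub>m 1\<^sub>m ?n - (pts_sym + (lns_sym + (pts_alt + lns_alt)))) = y ^ (?n - (1 + (1 + (3 + 3))))
      * ((y - plane_size) * ((y - plane_size) * (rest_cubic y * rest_cubic y)))"
    using n carrier by (intro det_char_add_of_mult_zero_power[OF _ _ _ y _ sym(1)]) auto
  thus ?thesis unfolding index_mat_sq_rest by (simp add: power2_eq_square)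
qed

abbreviation double_mat :: "real mat" where
  "double_mat \<equiv> index_mat xs (adj_entry (double_adj inc_adj (Inl p0) (Inr l0)))"

lemma double_mat_sq: "double_mat * double_mat = index_mat xs (\<lambda>a b. real q * of_bool (a = b) + sq_rest a b)"
  unfolding index_mat_mult[OF distinct_enum]
proof (rule index_mat_cong)
  fix a b assume "a \<in> set xs" "b \<in> set xs"
  then obtain \<alpha> w \<beta> z where "a = (\<alpha>, w)" "b = (\<beta>, z)" "w \<in> inc_vertices P L" "z \<in> inc_vertices P L"
    unfolding set_enum double_vertices_def by auto
  thus "(\<Sum>c\<in>set xs. adj_entry (double_adj inc_adj (Inl p0) (Inr l0)) a c
      * adj_entry (double_adj inc_adj (Inl p0) (Inr l0)) c b) = real q * of_bool (a = b) + sq_rest a b"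
    unfolding set_enum using sum_double_adj_sq by simp
qed

text \<open>The doubled graph is still bipartite, so \<open>det (x + M) = det (x - M)\<close> and the square of the
  characteristic polynomial is \<open>det (x\<^sup>2 - M\<^sup>2)\<close>.\<close>
lemma det_char_double_mat_sq:
  assumes x: "x\<^sup>2 \<noteq> real q"
  shows "det (x \<cdot>\<^sub>m 1\<^sub>m (length xs) - double_mat) ^ 2 = (x\<^sup>2 - real q) ^ (length xs - 8)
    * ((x\<^sup>2 - real q - plane_size)\<^sup>2 * (rest_cubic (x\<^sup>2 - real q))\<^sup>2)"
proof -
  let ?n = "length xs"
  have "det (x \<cdot>\<^sub>m 1\<^sub>m ?n + double_mat) = det (x \<cdot>\<^sub>m 1\<^sub>m ?n - double_mat)"
    by (rule det_char_index_mat_bipartite[OF distinct_enum, where side = "\<lambda>a. isl (snd a)"])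
      (use double_adj_inc_adj_bipartite[of "Inl p0" "Inr l0"] flag_point in \<open>auto simp: adj_entry_def\<close>)
  hence "det (x \<cdot>\<^sub>m 1\<^sub>m ?n - double_mat) ^ 2 = det (x\<^sup>2 \<cdot>\<^sub>m 1\<^sub>m ?n - double_mat * double_mat)"
    using det_char_mult_neg[OF index_mat_carrier] by (metis power2_eq_square)
  also have "x\<^sup>2 \<cdot>\<^sub>m 1\<^sub>m ?n - double_mat * double_mat = (x\<^sup>2 - real q) \<cdot>\<^sub>m 1\<^sub>m ?n - index_mat xs sq_rest"
    unfolding double_mat_sq index_mat_char[OF distinct_enum] by (rule index_mat_cong) (simp add: algebra_simps)
  finally show ?thesis using det_char_sq_rest[of "x\<^sup>2 - real q"] x by simp
qed

lemma char_poly_double_mat: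
  "char_poly double_mat = spectrum_poly (real q) (2 * (q * q + q + 1) - 4)"
proof -
  let ?m = "2 * (q * q + q + 1) - 4"
  let ?f = "spectrum_poly (real q) ?m"
  have q: "q \<ge> 1" by (rule order_ge_1)
  have n: "length xs - 8 = 2 * ?m" unfolding length_enum using q by simp
  have "poly (char_poly double_mat ^ 2) x = poly (?f ^ 2) x" if x: "x > real q" for x
  proof -
    have "real q * 1 < x * x" using x q by (intro mult_strict_mono) auto
    hence x2: "x\<^sup>2 \<noteq> real q" by (simp add: power2_eq_square)
    define W where "W = (x\<^sup>2 - real q) ^ ?m"
    define G where "G = rest_cubic (x\<^sup>2 - real q)"
    have W: "(x\<^sup>2 - real q) ^ (length xs - 8) = W\<^sup>2"
      unfolding n W_def by (simp add: power_mult[symmetric] mult.commute)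
    have N: "x\<^sup>2 - real q - plane_size = x\<^sup>2 - (real q + 1)\<^sup>2"
      by (simp add: power2_eq_square algebra_simps)
    have G: "poly (hl_cubic (real q)) x * poly (hl_cubic_reflect (real q)) x = G"
      unfolding G_def poly_hl_cubic_mult_reflect by (simp add: power2_eq_square)
    have "poly (char_poly double_mat ^ 2) x = det (x \<cdot>\<^sub>m 1\<^sub>m (length xs) - double_mat) ^ 2"
      unfolding poly_power poly_char_poly_eq_det[OF index_mat_carrier] ..
    also have "\<dots> = ((x\<^sup>2 - (real q + 1)\<^sup>2) * W * G)\<^sup>2"
      unfolding det_char_double_mat_sq[OF x2] W N G_def[symmetric] by (simp add: power_mult_distrib)
    also have "\<dots> = poly (?f ^ 2) x"
      unfolding poly_power poly_spectrum_poly[OF of_nat_0_le_iff] G W_def ..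
    finally show ?thesis .
  qed
  hence "char_poly double_mat ^ 2 = ?f ^ 2" by (rule poly_eq_of_eq_on_ray)
  hence "char_poly double_mat = ?f \<or> char_poly double_mat = - ?f" by (simp add: power2_eq_iff)
  moreover have "lead_coeff (char_poly double_mat) = 1"
    using degree_monic_char_poly[OF index_mat_carrier, of xs "adj_entry (double_adj inc_adj (Inl p0) (Inr l0))"]
    by simp
  ultimately show ?thesis using lead_coeff_spectrum_poly[of "real q" ?m] by auto
qed

end

section \<open>The HL-index\<close>

lemma double_adj_swap: "double_adj adj v0 v1 = double_adj adj v1 v0"
  unfolding double_adj_def by (intro ext) (auto simp: insert_commute)

lemma prime_power_nat_ge_2:
  assumes "prime_power_nat q"
  shows "q \<ge> 2"
proof -
  obtain p k where pk: "prime p" "k > 0" "q = p ^ k" using assms unfolding prime_power_nat_def by auto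
  have "p \<ge> 2" using pk(1) by (rule prime_ge_2_nat)
  moreover have "p ^ 1 \<le> p ^ k" using pk(2) \<open>p \<ge> 2\<close> by (intro power_increasing) auto
  ultimately show ?thesis using pk(3) by simp
qed

context plane_flag
begin

lemma HL_index_double_adj:
  assumes q: "q \<ge> 2"
  obtains R where "HL_index (double_vertices (inc_vertices P L)) (double_adj inc_adj (Inl p0) (Inr l0)) = R"
    "sqrt (real q - 1) - 1 < R" "R < sqrt (real q) - 1" "poly (hl_cubic (real q)) R = 0"
proof -
  let ?V = "double_vertices (inc_vertices P L)" and ?m = "2 * (q * q + q + 1) - 4"
  define xs where "xs = (SOME xs. distinct xs \<and> set xs = ?V)"
  have "finite ?V" unfolding double_vertices_def using finite_inc_vertices by simp
  hence "\<exists>xs. distinct xs \<and> set xs = ?V" using finite_distinct_list by metis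
  hence "distinct xs \<and> set xs = ?V" unfolding xs_def by (rule someI_ex)
  then interpret enumerated_plane_flag P L q p0 l0 xs by unfold_locales auto
  have adj_matrix: "adj_matrix ?V (double_adj inc_adj (Inl p0) (Inr l0)) = double_mat"
    unfolding adj_matrix_def xs_def[symmetric] Let_def index_mat_def adj_entry_def by (simp add: of_bool_def)
  have eigenvalues: "adj_eigenvalues ?V (double_adj inc_adj (Inl p0) (Inr l0))
      = rev (sorted_list_of_multiset (proots (spectrum_poly (real q) ?m)))"
    unfolding adj_eigenvalues_def adj_matrix char_poly_double_mat ..
  obtain R where R: "sqrt (real q - 1) - 1 < R" "R < sqrt (real q) - 1" "poly (hl_cubic (real q)) R = 0"
    "rev (sorted_list_of_multiset (proots (spectrum_poly (real q) ?m))) ! (?m + 3) = R"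
    "rev (sorted_list_of_multiset (proots (spectrum_poly (real q) ?m))) ! (?m + 4) = - R"
    using spectrum_poly_median_roots[of "real q" ?m] q by auto
  have "sqrt (real q - 1) \<ge> 1" using q by simp
  hence "R > 0" using R(1) by linarith
  moreover have "card ?V = 4 * (q * q + q + 1)"
    using distinct_card[OF distinct_enum] length_enum set_enum by simp
  hence "(card ?V + 1) div 2 - 1 = ?m + 3" "(card ?V + 2) div 2 - 1 = ?m + 4" using q by simp_all
  ultimately have "HL_index ?V (double_adj inc_adj (Inl p0) (Inr l0)) = R"
    unfolding HL_index_def Let_def eigenvalues by (simp only: R(4,5))
  thus ?thesis using R that by blast
qed

end

theorem mainTheorem8:
  fixes P :: "'p set" and L :: "'p set set" and q :: nat and v0 v1 :: "'p + 'p set"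
  assumes "prime_power_nat q"
    and "proj_plane_order P L q"
    and "v0 \<in> inc_vertices P L" and "v1 \<in> inc_vertices P L" and "inc_adj v0 v1"
  shows "sqrt (real q - 1) - 1 < HL_index (double_vertices (inc_vertices P L)) (double_adj inc_adj v0 v1)
    \<and> HL_index (double_vertices (inc_vertices P L)) (double_adj inc_adj v0 v1) < sqrt (real q) - 1
    \<and> (let r = HL_index (double_vertices (inc_vertices P L)) (double_adj inc_adj v0 v1) in
         r ^ 3 + (1 - real q) * r ^ 2 - 3 * real q * r + (real q) ^ 2 - real q = 0)"
proof -
  obtain x l where flag: "v0 = Inl x \<and> v1 = Inr l \<or> v0 = Inr l \<and> v1 = Inl x" "x \<in> l"
    using assms(5) unfolding inc_adj_def by auto
  have "l \<in> L" using flag(1) assms(3,4) unfolding inc_vertices_def by auto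
  then interpret plane_flag P L q x l
    using assms(2) flag(2) by unfold_locales
  have "double_adj inc_adj v0 v1 = double_adj inc_adj (Inl x) (Inr l)"
    using flag(1) double_adj_swap by metis
  moreover obtain R where
    "HL_index (double_vertices (inc_vertices P L)) (double_adj inc_adj (Inl x) (Inr l)) = R"
    "sqrt (real q - 1) - 1 < R" "R < sqrt (real q) - 1" "poly (hl_cubic (real q)) R = 0"
    using HL_index_double_adj prime_power_nat_ge_2[OF assms(1)] by blast
  ultimately show ?thesis unfolding Let_def poly_hl_cubic by simp
qed

end
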